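(* Under Assumption 1 and given $P(\sigma_{i}=\sigma)=1$, \begin{align*} CD = -\sqrt{\left(T-\frac{T}{N}\right)/2} - \frac{1}{\sqrt{2N}} \left(\frac{1}{\sqrt{NT}} \sum_{i=1}^N \sum_{t=1}^T \left( \frac{\varepsilon_{i,t}^2}{\sigma^{2}}-1\right)\right) + o_P(N^{-1/2}). \end{align*}
   Context: Panel model with additive time effects: $y_{i,t} = \mathbf{x}_{i,t}'\boldsymbol{\beta} + \tau_t + \mu_i + \varepsilon_{i,t}$, with $\boldsymbol{\beta}$, $\mu_i$ and the error variance known (w.l.o.g. $y_{i,t}=\tau_t+\varepsilon_{i,t}$). Time effects are estimated by cross-section averages $\hat\tau_t=\overline{y}_t$, residuals are $\hat\varepsilon_{i,t}=y_{i,t}-\overline{y}_t$, and $CD=\sqrt{\frac{2}{TN(N-1)}}\sum_{i=2}^N\sum_{j=1}^{i-1}\sum_{t=1}^T \hat\varepsilon_{i,t}\hat\varepsilon_{j,t}/(\sigma_i\sigma_j)$. Assumption 1: $\varepsilon_{i,t}=\sigma_i\eta_{i,t}$ with $\eta_{i,t}$ i.i.d. over $i,t$, $\mathbb{E}[\eta_{i,t}]=0$, $\mathbb{E}[\eta_{i,t}^2]=1$, $\mathbb{E}[\eta_{i,t}^8]<M$; $\sigma_i\in[\delta,M]$, i.i.d. over $i$, independent of $\eta_{i,t}$. *)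

theory Defs
  imports "HOL-Probability.Probability"
begin

definition xsec_mean :: "(nat \<Rightarrow> nat \<Rightarrow> real) \<Rightarrow> nat \<Rightarrow> nat \<Rightarrow> real" where
  "xsec_mean y N t = (\<Sum>i=1..N. y i t) / real N"

definition resid :: "(nat \<Rightarrow> nat \<Rightarrow> real) \<Rightarrow> nat \<Rightarrow> nat \<Rightarrow> nat \<Rightarrow> real" where
  "resid y N i t = y i t - xsec_mean y N t"

text \<open>The CD statistic, with known scales s i (= sigma_i).\<close>
definition CD_stat :: "(nat \<Rightarrow> nat \<Rightarrow> real) \<Rightarrow> (nat \<Rightarrow> real) \<Rightarrow> nat \<Rightarrow> nat \<Rightarrow> real" where
  "CD_stat y s N T = sqrt (2 / (real T * real N * (real N - 1))) *
     (\<Sum>i=2..N. \<Sum>j=1..i-1. \<Sum>t=1..T. resid y N i t * resid y N j t / (s i * s j))"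

end

theory Submission
  imports Defs "HOL-Real_Asymp.Real_Asymp"
begin

(*
  With a common scale sigma the statistic is an exact function of the standardized errors
  eta: writing S = sum_{i,t} (eta_it^2 - 1) and Q = sum_t sum_{j<i} eta_it eta_jt,
    CD = - sqrt ((T - T/N)/2) - sqrt (1 - 1/N) / (N sqrt (2T)) * S + sqrt (2/(T N (N-1))) / N * Q,
  because the residuals are sigma times the cross-sectionally demeaned errors, and the pairwise
  products of demeaned values sum to minus half their sum of squares. The remainder of the
  expansion is therefore a S + b Q with 0 <= a <= 1/(N^2 sqrt (2T)) and b = sqrt (2/(T N (N-1))) / N.
  By independence, S and Q are sums of uncorrelated mean-zero terms, so E S^2 <= N T kappa and
  E Q^2 <= T N^2 for a fourth-moment bound kappa, and Markov's inequality applied to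
  2 N (a^2 S^2 + b^2 Q^2) bounds P (sqrt N |a S + b Q| > e) by (kappa + 4) / (e^2 (N - 1)),
  uniformly in T >= 1.
*)

lemma integrable_mult_if_square_integrable:
  fixes f g :: "'a \<Rightarrow> real"
  assumes [measurable]: "f \<in> borel_measurable M" "g \<in> borel_measurable M"
    and "integrable M (\<lambda>x. f x ^ 2)" "integrable M (\<lambda>x. g x ^ 2)"
  shows "integrable M (\<lambda>x. f x * g x)"
proof (rule Bochner_Integration.integrable_bound)
  show "integrable M (\<lambda>x. f x ^ 2 + g x ^ 2)"
    using assms(3,4) by simp
  show "AE x in M. norm (f x * g x) \<le> norm (f x ^ 2 + g x ^ 2)"
  proof (rule AE_I2)
    fix x
    have "2 * (\<bar>f x\<bar> * \<bar>g x\<bar>) \<le> f x ^ 2 + g x ^ 2"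
      using sum_squares_bound[of "\<bar>f x\<bar>" "\<bar>g x\<bar>"] by simp
    moreover have "0 \<le> \<bar>f x\<bar> * \<bar>g x\<bar>" by simp
    ultimately have "\<bar>f x\<bar> * \<bar>g x\<bar> \<le> f x ^ 2 + g x ^ 2" by linarith
    then show "norm (f x * g x) \<le> norm (f x ^ 2 + g x ^ 2)"
      by (simp add: abs_mult)
  qed
qed measurable

lemma integral_square_sum_orthogonal:
  fixes Z :: "'k \<Rightarrow> 'a \<Rightarrow> real"
  assumes "finite K" and [measurable]: "\<And>k. k \<in> K \<Longrightarrow> Z k \<in> borel_measurable M"
    and square_integrable: "\<And>k. k \<in> K \<Longrightarrow> integrable M (\<lambda>x. Z k x ^ 2)"
    and orthogonal: "\<And>k l. k \<in> K \<Longrightarrow> l \<in> K \<Longrightarrow> k \<noteq> l \<Longrightarrow> integral\<^sup>L M (\<lambda>x. Z k x * Z l x) = 0"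
  shows "integrable M (\<lambda>x. (\<Sum>k\<in>K. Z k x) ^ 2)"
    and "integral\<^sup>L M (\<lambda>x. (\<Sum>k\<in>K. Z k x) ^ 2) = (\<Sum>k\<in>K. integral\<^sup>L M (\<lambda>x. Z k x ^ 2))"
proof -
  have square: "(\<lambda>x. (\<Sum>k\<in>K. Z k x) ^ 2) = (\<lambda>x. \<Sum>k\<in>K. \<Sum>l\<in>K. Z k x * Z l x)"
    by (simp add: power2_eq_square sum_product)
  have products: "integrable M (\<lambda>x. Z k x * Z l x)" if "k \<in> K" "l \<in> K" for k l
    using that by (intro integrable_mult_if_square_integrable square_integrable) auto
  then show "integrable M (\<lambda>x. (\<Sum>k\<in>K. Z k x) ^ 2)"
    unfolding square by auto
  have "integral\<^sup>L M (\<lambda>x. (\<Sum>k\<in>K. Z k x) ^ 2) = (\<Sum>k\<in>K. \<Sum>l\<in>K. integral\<^sup>L M (\<lambda>x. Z k x * Z l x))"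
    unfolding square using products by simp
  also have "\<dots> = (\<Sum>k\<in>K. integral\<^sup>L M (\<lambda>x. Z k x * Z k x))"
    using orthogonal \<open>finite K\<close> by (intro sum.cong refl) (auto simp: sum.remove intro!: sum.neutral)
  finally show "integral\<^sup>L M (\<lambda>x. (\<Sum>k\<in>K. Z k x) ^ 2) = (\<Sum>k\<in>K. integral\<^sup>L M (\<lambda>x. Z k x ^ 2))"
    by (simp add: power2_eq_square)
qed

lemma (in prob_space) expectation_mult_indep_restrict:
  fixes X :: "'i \<Rightarrow> 'a \<Rightarrow> real" and f :: "real \<Rightarrow> real" and h :: "('i \<Rightarrow> real) \<Rightarrow> real"
  assumes indep: "indep_vars (\<lambda>_. borel) X UNIV" and "p \<notin> A"
    and [measurable]: "f \<in> borel_measurable borel" "h \<in> borel_measurable (PiM A (\<lambda>_. borel))"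
    and "integrable M (\<lambda>\<omega>. f (X p \<omega>))" "integrable M (\<lambda>\<omega>. h (\<lambda>q\<in>A. X q \<omega>))"
  shows "expectation (\<lambda>\<omega>. f (X p \<omega>) * h (\<lambda>q\<in>A. X q \<omega>)) =
         expectation (\<lambda>\<omega>. f (X p \<omega>)) * expectation (\<lambda>\<omega>. h (\<lambda>q\<in>A. X q \<omega>))"
proof -
  have family: "indep_vars (\<lambda>j. PiM (case_bool {p} A j) (\<lambda>_. borel))
          (\<lambda>j \<omega>. restrict (\<lambda>i. X i \<omega>) (case_bool {p} A j)) UNIV"
    by (rule indep_vars_restrict[OF indep])
      (use \<open>p \<notin> A\<close> in \<open>auto simp: disjoint_family_on_def split: bool.split\<close>)
  have spaces: "(\<lambda>j. PiM (case_bool {p} A j) (\<lambda>_. borel))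
      = case_bool (PiM {p} (\<lambda>_. borel)) (PiM A (\<lambda>_. borel))"
    and vars: "(\<lambda>j \<omega>. restrict (\<lambda>i. X i \<omega>) (case_bool {p} A j))
      = case_bool (\<lambda>\<omega>. restrict (\<lambda>i. X i \<omega>) {p}) (\<lambda>\<omega>. restrict (\<lambda>i. X i \<omega>) A)"
    by (auto split: bool.split)
  have "indep_var (PiM {p} (\<lambda>_. borel)) (\<lambda>\<omega>. restrict (\<lambda>i. X i \<omega>) {p})
                       (PiM A (\<lambda>_. borel)) (\<lambda>\<omega>. restrict (\<lambda>i. X i \<omega>) A)"
    using family unfolding indep_var_def spaces vars .
  then have "indep_var borel ((\<lambda>v. f (v p)) \<circ> (\<lambda>\<omega>. restrict (\<lambda>i. X i \<omega>) {p}))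
                       borel (h \<circ> (\<lambda>\<omega>. restrict (\<lambda>i. X i \<omega>) A))"
    by (rule indep_var_compose) measurable
  then show ?thesis
    by (intro indep_var_lebesgue_integral) (use assms(5,6) in \<open>auto simp: comp_def\<close>)
qed

lemma (in finite_measure) measure_tail_linear_combination_le:
  fixes S Q :: "'a \<Rightarrow> real"
  assumes [measurable]: "S \<in> borel_measurable M" "Q \<in> borel_measurable M"
    and "integrable M (\<lambda>x. S x ^ 2)" "integrable M (\<lambda>x. Q x ^ 2)" and "0 \<le> n" "0 < e"
  shows "measure M {x \<in> space M. e < sqrt n * \<bar>a * S x + b * Q x\<bar>}
    \<le> 2 * n * (a^2 * integral\<^sup>L M (\<lambda>x. S x ^ 2) + b^2 * integral\<^sup>L M (\<lambda>x. Q x ^ 2)) / e^2"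
proof -
  define u where "u x = 2 * n * (a^2 * S x ^ 2 + b^2 * Q x ^ 2)" for x
  have u_integrable: "integrable M u"
    unfolding u_def using assms(3,4) by simp
  have "{x \<in> space M. e < sqrt n * \<bar>a * S x + b * Q x\<bar>} \<subseteq> {x \<in> space M. e^2 \<le> u x}"
  proof safe
    fix x assume "x \<in> space M" and "e < sqrt n * \<bar>a * S x + b * Q x\<bar>"
    then have "e^2 \<le> n * (a * S x + b * Q x) ^ 2"
      using \<open>0 < e\<close> \<open>0 \<le> n\<close> power_mono[of e "sqrt n * \<bar>a * S x + b * Q x\<bar>" 2]
      by (simp add: power_mult_distrib)
    also have "\<dots> \<le> n * (2 * (a * S x) ^ 2 + 2 * (b * Q x) ^ 2)"
      using sum_squares_bound[of "a * S x" "b * Q x"] \<open>0 \<le> n\<close>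
      by (intro mult_left_mono) (simp_all add: power2_sum)
    also have "\<dots> = u x"
      unfolding u_def by (simp add: power_mult_distrib algebra_simps)
    finally show "e^2 \<le> u x" .
  qed
  then have "measure M {x \<in> space M. e < sqrt n * \<bar>a * S x + b * Q x\<bar>}
      \<le> measure M {x \<in> space M. e^2 \<le> u x}"
    unfolding u_def by (intro finite_measure_mono) measurable
  also have "\<dots> \<le> integral\<^sup>L M u / e^2"
    using u_integrable \<open>0 < e\<close> \<open>0 \<le> n\<close> unfolding u_def
    by (intro integral_Markov_inequality_measure[where A="space M"]) auto
  also have "integral\<^sup>L M u = 2 * n * (a^2 * integral\<^sup>L M (\<lambda>x. S x ^ 2) + b^2 * integral\<^sup>L M (\<lambda>x. Q x ^ 2))"
    unfolding u_def using assms(3,4) by simp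
  finally show ?thesis .
qed

lemma
  fixes g :: "real \<Rightarrow> real"
  assumes [measurable]: "X \<in> borel_measurable M" "Y \<in> borel_measurable M" "g \<in> borel_measurable borel"
    and same_distr: "distr M borel X = distr M borel Y"
  shows integrable_comp_eq_if_distr_eq: "integrable M (\<lambda>x. g (X x)) \<longleftrightarrow> integrable M (\<lambda>x. g (Y x))"
    and integral_comp_eq_if_distr_eq: "integral\<^sup>L M (\<lambda>x. g (X x)) = integral\<^sup>L M (\<lambda>x. g (Y x))"
  using integrable_distr_eq[OF assms(1,3)] integrable_distr_eq[OF assms(2,3)]
    integral_distr[OF assms(1,3)] integral_distr[OF assms(2,3)]
  by (simp_all add: same_distr)

lemma one_minus_sqrt_one_minus_bounds:
  fixes x :: real
  assumes "0 \<le> x" "x \<le> 1"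
  shows "0 \<le> 1 - sqrt (1 - x)" and "1 - sqrt (1 - x) \<le> x"
proof -
  show "0 \<le> 1 - sqrt (1 - x)" using assms by simp
  have "sqrt (1 - x) * sqrt (1 - x) \<le> sqrt (1 - x)"
    using assms by (intro mult_left_le) auto
  then show "1 - sqrt (1 - x) \<le> x" using assms by simp
qed

lemma tendsto_zero_prod_sequentially_if_le_inverse:
  fixes F :: "nat \<Rightarrow> nat \<Rightarrow> real"
  assumes "\<And>N T. 0 \<le> F N T" "\<And>N T. 2 \<le> N \<Longrightarrow> 1 \<le> T \<Longrightarrow> F N T \<le> C / (real N - 1)"
  shows "((\<lambda>(N, T). F N T) \<longlongrightarrow> 0) (sequentially \<times>\<^sub>F sequentially)"
proof (rule tendsto_sandwich[OF _ _ tendsto_const])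
  show "\<forall>\<^sub>F p in sequentially \<times>\<^sub>F sequentially. 0 \<le> (case p of (N, T) \<Rightarrow> F N T)"
    using assms(1) by (intro always_eventually) (simp add: split_paired_all)
  have "\<forall>\<^sub>F p in sequentially \<times>\<^sub>F sequentially. 2 \<le> fst p \<and> 1 \<le> snd p"
    unfolding eventually_prod_sequentially by (rule exI[of _ 2]) auto
  then show "\<forall>\<^sub>F p in sequentially \<times>\<^sub>F sequentially. (case p of (N, T) \<Rightarrow> F N T) \<le> C / (real (fst p) - 1)"
    by eventually_elim (use assms(2) in \<open>auto simp: split_paired_all\<close>)
  have "(\<lambda>N. C / (real N - 1)) \<longlonglongrightarrow> 0"
    by real_asymp
  then show "((\<lambda>p. C / (real (fst p) - 1)) \<longlongrightarrow> 0) (sequentially \<times>\<^sub>F sequentially)"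
    by (rule filterlim_compose) (rule filterlim_fst)
qed

lemma sum_lower_triangle_products:
  fixes f :: "nat \<Rightarrow> 'a::comm_ring_1"
  shows "2 * (\<Sum>i=2..N. \<Sum>j=1..i-1. f i * f j) = (\<Sum>i=1..N. f i)^2 - (\<Sum>i=1..N. f i ^ 2)"
proof (induction N)
  case (Suc n)
  show ?case
  proof (cases "n = 0")
    case False
    then have "(\<Sum>i=2..Suc n. \<Sum>j=1..i-1. f i * f j)
        = (\<Sum>i=2..n. \<Sum>j=1..i-1. f i * f j) + f (Suc n) * (\<Sum>j=1..n. f j)"
      by (simp add: sum.atLeast_Suc_atMost_Suc_shift sum_distrib_left)
    with Suc.IH show ?thesis
      by (simp add: algebra_simps power2_eq_square)
  qed (simp add: power2_eq_square)
qed simp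

definition centred_square_sum :: "(nat \<Rightarrow> nat \<Rightarrow> real) \<Rightarrow> nat \<Rightarrow> nat \<Rightarrow> real" where
  "centred_square_sum e N T = (\<Sum>i=1..N. \<Sum>t=1..T. e i t ^ 2 - 1)"

definition cross_product_sum :: "(nat \<Rightarrow> nat \<Rightarrow> real) \<Rightarrow> nat \<Rightarrow> nat \<Rightarrow> real" where
  "cross_product_sum e N T = (\<Sum>t=1..T. \<Sum>i=2..N. \<Sum>j=1..i-1. e i t * e j t)"

lemma sum_lower_triangle_demeaned_products:
  fixes f :: "nat \<Rightarrow> real"
  assumes "1 \<le> N"
  defines "m \<equiv> (\<Sum>l=1..N. f l) / real N"
  shows "(\<Sum>i=2..N. \<Sum>j=1..i-1. (f i - m) * (f j - m))
    = (\<Sum>i=2..N. \<Sum>j=1..i-1. f i * f j) / real N - (real N - 1) / (2 * real N) * (\<Sum>i=1..N. f i ^ 2)"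
proof -
  have N: "real N > 0" using assms(1) by simp
  have "(\<Sum>i=1..N. f i - m) = 0"
    using N unfolding m_def by (simp add: sum_subtractf)
  moreover have "(\<Sum>i=1..N. (f i - m) ^ 2) = (\<Sum>i=1..N. f i ^ 2) - (\<Sum>i=1..N. f i)^2 / real N"
    using N unfolding m_def
    by (simp add: power2_diff sum.distrib sum_subtractf sum_distrib_left[symmetric]
        sum_divide_distrib[symmetric] sum_distrib_right[symmetric] field_simps power2_eq_square)
  ultimately show ?thesis
    using sum_lower_triangle_products[of f N] sum_lower_triangle_products[of "\<lambda>i. f i - m" N] N
    by (simp add: field_simps)
qed

lemma CD_scale_identities:
  assumes "1 \<le> N"
  shows "sqrt (2 / (real T * real N * (real N - 1))) * (real N - 1) / 2 = sqrt (1 - 1 / real N) / sqrt (2 * real T)"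
    and "sqrt (1 - 1 / real N) / sqrt (2 * real T) * real T = sqrt ((real T - real T / real N) / 2)"
proof -
  have "sqrt (2 / (real T * real N * (real N - 1))) * (real N - 1) / 2
      = sqrt ((real N - 1) / (2 * real T * real N))"
  proof (cases "N = 1")
    case False
    then have "real N - 1 > 0" using assms by simp
    then have "sqrt (((real N - 1) / 2)^2) = (real N - 1) / 2" by simp
    then have "sqrt (2 / (real T * real N * (real N - 1))) * (real N - 1) / 2
        = sqrt (2 / (real T * real N * (real N - 1)) * ((real N - 1) / 2)^2)"
      by (simp only: real_sqrt_mult)
    also have "2 / (real T * real N * (real N - 1)) * ((real N - 1) / 2)^2 = (real N - 1) / (2 * real T * real N)"
      using \<open>real N - 1 > 0\<close> by (cases "T = 0") (simp_all add: field_simps power2_eq_square)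
    finally show ?thesis .
  qed simp
  then show "sqrt (2 / (real T * real N * (real N - 1))) * (real N - 1) / 2 = sqrt (1 - 1 / real N) / sqrt (2 * real T)"
    using assms by (simp add: real_sqrt_divide[symmetric] field_simps)
  show "sqrt (1 - 1 / real N) / sqrt (2 * real T) * real T = sqrt ((real T - real T / real N) / 2)"
  proof (cases "T = 0")
    case False
    have "sqrt (1 - 1 / real N) / sqrt (2 * real T) * real T
        = sqrt (real T ^ 2 * ((1 - 1 / real N) / (2 * real T)))"
      by (simp add: real_sqrt_mult real_sqrt_divide)
    also have "real T ^ 2 * ((1 - 1 / real N) / (2 * real T)) = (real T - real T / real N) / 2"
      using False by (simp add: field_simps power2_eq_square)
    finally show ?thesis .
  qed simp
qed

lemma resid_common_scale:
  assumes "1 \<le> N"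
  shows "resid (\<lambda>i t. \<tau> t + \<sigma> * e i t) N i t = \<sigma> * (e i t - (\<Sum>l=1..N. e l t) / real N)"
  using assms unfolding resid_def xsec_mean_def
  by (simp add: sum.distrib sum_distrib_left[symmetric] field_simps)

lemma CD_stat_common_scale:
  fixes e :: "nat \<Rightarrow> nat \<Rightarrow> real"
  assumes N: "1 \<le> N" and "\<sigma> \<noteq> 0"
  shows "CD_stat (\<lambda>i t. \<tau> t + \<sigma> * e i t) (\<lambda>_. \<sigma>) N T =
     - sqrt ((real T - real T / real N) / 2)
     - sqrt (1 - 1 / real N) / (real N * sqrt (2 * real T)) * centred_square_sum e N T
     + sqrt (2 / (real T * real N * (real N - 1))) / real N * cross_product_sum e N T"
proof -
  define k where "k = sqrt (2 / (real T * real N * (real N - 1)))"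
  define r where "r i t = e i t - (\<Sum>l=1..N. e l t) / real N" for i t
  have "CD_stat (\<lambda>i t. \<tau> t + \<sigma> * e i t) (\<lambda>_. \<sigma>) N T
      = k * (\<Sum>i=2..N. \<Sum>j=1..i-1. \<Sum>t=1..T. r i t * r j t)"
    unfolding CD_stat_def k_def resid_common_scale[OF N] r_def
    using \<open>\<sigma> \<noteq> 0\<close> by (simp add: power2_eq_square)
  also have "(\<Sum>i=2..N. \<Sum>j=1..i-1. \<Sum>t=1..T. r i t * r j t)
      = (\<Sum>t=1..T. \<Sum>i=2..N. \<Sum>j=1..i-1. r i t * r j t)"
    by (subst sum.swap, rule sum.cong[OF refl], rule sum.swap)
  also have "\<dots> = (\<Sum>t=1..T. (\<Sum>i=2..N. \<Sum>j=1..i-1. e i t * e j t) / real N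
      - (real N - 1) / (2 * real N) * (\<Sum>i=1..N. e i t ^ 2))"
    unfolding r_def using sum_lower_triangle_demeaned_products[OF N] by simp
  also have "\<dots> = cross_product_sum e N T / real N
      - (real N - 1) / (2 * real N) * (centred_square_sum e N T + real N * real T)"
  proof -
    have "centred_square_sum e N T + real N * real T = (\<Sum>t=1..T. \<Sum>i=1..N. e i t ^ 2)"
      unfolding centred_square_sum_def by (simp add: sum_subtractf) (rule sum.swap)
    then show ?thesis
      unfolding cross_product_sum_def by (simp add: sum_subtractf sum_divide_distrib sum_distrib_left)
  qed
  also have "k * \<dots> = k / real N * cross_product_sum e N T
      - (k * (real N - 1) / 2) / real N * centred_square_sum e N T - (k * (real N - 1) / 2) * real T"
    using N by (simp add: field_simps)
  finally show ?thesis
    unfolding k_def CD_scale_identities[OF N] by simp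
qed

lemma CD_stat_common_scale_remainder:
  fixes e :: "nat \<Rightarrow> nat \<Rightarrow> real"
  assumes "1 \<le> N" "\<sigma> \<noteq> 0"
  shows "CD_stat (\<lambda>i t. \<tau> t + \<sigma> * e i t) (\<lambda>_. \<sigma>) N T
      - (- sqrt ((real T - real T / real N) / 2)
         - 1 / sqrt (2 * real N) * (1 / sqrt (real N * real T) *
           (\<Sum>i=1..N. \<Sum>t=1..T. (\<sigma> * e i t)^2 / \<sigma>^2 - 1)))
    = (1 - sqrt (1 - 1 / real N)) / (real N * sqrt (2 * real T)) * centred_square_sum e N T
      + sqrt (2 / (real T * real N * (real N - 1))) / real N * cross_product_sum e N T"
proof -
  have normalised: "(\<Sum>i=1..N. \<Sum>t=1..T. (\<sigma> * e i t)^2 / \<sigma>^2 - 1) = centred_square_sum e N T"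
    using \<open>\<sigma> \<noteq> 0\<close> unfolding centred_square_sum_def by (simp add: power_mult_distrib)
  have "sqrt (2 * real N) * sqrt (real N * real T) = sqrt (real N ^ 2 * (2 * real T))"
    by (simp add: real_sqrt_mult[symmetric] power2_eq_square ac_simps)
  also have "\<dots> = real N * sqrt (2 * real T)"
    by (simp add: real_sqrt_mult)
  finally have scale: "sqrt (2 * real N) * sqrt (real N * real T) = real N * sqrt (2 * real T)" .
  show ?thesis
    unfolding CD_stat_common_scale[OF assms] normalised using scale
    by (simp add: algebra_simps diff_divide_distrib)
qed

lemma CD_remainder_coefficients_le:
  assumes "2 \<le> N" "1 \<le> T" "0 \<le> \<kappa>"
  shows "2 * real N * (((1 - sqrt (1 - 1 / real N)) / (real N * sqrt (2 * real T)))^2 * (real N * real T * \<kappa>)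
      + (sqrt (2 / (real T * real N * (real N - 1))) / real N)^2 * (real T * real N ^ 2))
    \<le> (\<kappa> + 4) / (real N - 1)"
proof -
  define c where "c = 1 - sqrt (1 - 1 / real N)"
  have N: "2 \<le> real N" and T: "1 \<le> real T" using assms by simp_all
  have "c ^ 2 \<le> (1 / real N) ^ 2"
    using one_minus_sqrt_one_minus_bounds[of "1 / real N"] N unfolding c_def by (intro power_mono) auto
  also have "\<dots> \<le> 1 / (real N - 1)"
  proof -
    have "1 * real N \<le> real N * real N" using N by (intro mult_right_mono) auto
    then show ?thesis using N by (simp add: field_simps power2_eq_square) (use \<open>1 * real N \<le> _\<close> in linarith)
  qed
  finally have c_term: "c ^ 2 * \<kappa> \<le> \<kappa> / (real N - 1)"
    using mult_right_mono[of _ _ \<kappa>] \<open>0 \<le> \<kappa>\<close> by fastforce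
  have "2 * real N * ((c / (real N * sqrt (2 * real T)))^2 * (real N * real T * \<kappa>)
      + (sqrt (2 / (real T * real N * (real N - 1))) / real N)^2 * (real T * real N ^ 2))
    = c ^ 2 * \<kappa> + 4 / (real N - 1)"
    using N T by (simp add: field_simps power2_eq_square)
  also have "\<dots> \<le> (\<kappa> + 4) / (real N - 1)"
    using c_term by (simp add: add_divide_distrib)
  finally show ?thesis
    unfolding c_def .
qed

locale standardized_panel = prob_space +
  fixes \<eta> :: "nat \<Rightarrow> nat \<Rightarrow> 'a \<Rightarrow> real" and \<kappa> :: real
  assumes \<eta>_measurable [measurable]: "\<And>i t. \<eta> i t \<in> borel_measurable M"
    and \<eta>_indep: "indep_vars (\<lambda>_. borel) (\<lambda>p. \<eta> (fst p) (snd p)) UNIV"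
    and \<eta>_fourth_integrable: "\<And>i t. integrable M (\<lambda>x. \<eta> i t x ^ 4)"
    and \<eta>_mean: "\<And>i t. expectation (\<eta> i t) = 0"
    and \<eta>_variance: "\<And>i t. expectation (\<lambda>x. \<eta> i t x ^ 2) = 1"
    and \<eta>_fourth_moment: "\<And>i t. expectation (\<lambda>x. \<eta> i t x ^ 4) \<le> \<kappa>"

lemma standardized_panel_if_iid:
  fixes \<eta> :: "nat \<Rightarrow> nat \<Rightarrow> 'a \<Rightarrow> real"
  assumes "prob_space M"
    and [measurable]: "\<And>i t. \<eta> i t \<in> borel_measurable M"
    and "prob_space.indep_vars M (\<lambda>_. borel) (\<lambda>p. \<eta> (fst p) (snd p)) UNIV"
    and ident: "\<And>i t. distr M borel (\<eta> i t) = distr M borel (\<eta> 0 0)"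
    and "integrable M (\<lambda>x. \<eta> 0 0 x ^ 4)"
    and "integral\<^sup>L M (\<eta> 0 0) = 0" "integral\<^sup>L M (\<lambda>x. \<eta> 0 0 x ^ 2) = 1"
  shows "standardized_panel M \<eta> (integral\<^sup>L M (\<lambda>x. \<eta> 0 0 x ^ 4))"
proof (intro standardized_panel.intro standardized_panel_axioms.intro)
  fix i t
  have same_moments: "integrable M (\<lambda>x. \<eta> i t x ^ k) = integrable M (\<lambda>x. \<eta> 0 0 x ^ k)"
    "integral\<^sup>L M (\<lambda>x. \<eta> i t x ^ k) = integral\<^sup>L M (\<lambda>x. \<eta> 0 0 x ^ k)" for k :: nat
    by (intro integrable_comp_eq_if_distr_eq integral_comp_eq_if_distr_eq ident; measurable)+
  show "integrable M (\<lambda>x. \<eta> i t x ^ 4)"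
    using assms(5) same_moments(1)[of 4] by simp
  show "integral\<^sup>L M (\<eta> i t) = 0"
    using assms(6) same_moments(2)[of 1] by simp
  show "integral\<^sup>L M (\<lambda>x. \<eta> i t x ^ 2) = 1"
    using assms(7) same_moments(2)[of 2] by simp
  show "integral\<^sup>L M (\<lambda>x. \<eta> i t x ^ 4) \<le> integral\<^sup>L M (\<lambda>x. \<eta> 0 0 x ^ 4)"
    using same_moments(2)[of 4] by simp
qed (fact assms)+

context standardized_panel
begin

abbreviation X :: "nat \<times> nat \<Rightarrow> 'a \<Rightarrow> real" where
  "X p \<equiv> \<eta> (fst p) (snd p)"

lemma \<eta>_square_integrable: "integrable M (\<lambda>x. \<eta> i t x ^ 2)"
  using square_integrable_imp_integrable[of "\<lambda>x. \<eta> i t x ^ 2"] \<eta>_fourth_integrable[of i t]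
  by (simp flip: power_mult)

lemma \<eta>_integrable: "integrable M (\<eta> i t)"
  using \<eta>_square_integrable by (rule square_integrable_imp_integrable[rotated]) simp

lemma \<kappa>_nonneg: "0 \<le> \<kappa>"
proof -
  have "0 \<le> expectation (\<lambda>x. \<eta> 0 0 x ^ 4)"
    by (intro integral_nonneg_AE AE_I2) (simp add: zero_le_even_power)
  then show ?thesis using \<eta>_fourth_moment[of 0 0] by linarith
qed

lemma expectation_mult_indep:
  fixes f g :: "real \<Rightarrow> real"
  assumes "p \<noteq> q" and [measurable]: "f \<in> borel_measurable borel" "g \<in> borel_measurable borel"
    and "integrable M (\<lambda>x. f (X p x))" "integrable M (\<lambda>x. g (X q x))"
  shows "expectation (\<lambda>x. f (X p x) * g (X q x)) = expectation (\<lambda>x. f (X p x)) * expectation (\<lambda>x. g (X q x))"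
  using expectation_mult_indep_restrict[OF \<eta>_indep, of p "{q}" f "\<lambda>v. g (v q)"] assms by simp

lemma expectation_mult_vanish_if_unique:
  assumes "p \<notin> {b, c, d}"
  shows "expectation (\<lambda>x. X p x * (X b x * X c x * X d x)) = 0"
proof -
  have "integrable M (\<lambda>x. X c x ^ 2 * X d x ^ 2)"
    using \<eta>_fourth_integrable
    by (intro integrable_mult_if_square_integrable) (simp_all flip: power_mult)
  then have "integrable M (\<lambda>x. X b x * (X c x * X d x))"
    using \<eta>_square_integrable
    by (intro integrable_mult_if_square_integrable) (simp_all add: power_mult_distrib)
  then show ?thesis
    using expectation_mult_indep_restrict[OF \<eta>_indep, of p "{b, c, d}" "\<lambda>y. y" "\<lambda>v. v b * v c * v d"]
      assms \<eta>_integrable \<eta>_mean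
    by (simp add: mult.assoc)
qed

lemma centred_square_sum_measurable [measurable]:
  "(\<lambda>x. centred_square_sum (\<lambda>i t. \<eta> i t x) N T) \<in> borel_measurable M"
  unfolding centred_square_sum_def by measurable

lemma cross_product_sum_measurable [measurable]:
  "(\<lambda>x. cross_product_sum (\<lambda>i t. \<eta> i t x) N T) \<in> borel_measurable M"
  unfolding cross_product_sum_def by measurable

lemma centred_square_sum_second_moment:
  shows "integrable M (\<lambda>x. centred_square_sum (\<lambda>i t. \<eta> i t x) N T ^ 2)"
    and "expectation (\<lambda>x. centred_square_sum (\<lambda>i t. \<eta> i t x) N T ^ 2) \<le> real N * real T * \<kappa>"
proof -
  let ?K = "{1..N} \<times> {1..T}"
  define Z where "Z p x = X p x ^ 2 - 1" for p x
  have sum_Z: "centred_square_sum (\<lambda>i t. \<eta> i t x) N T = (\<Sum>p\<in>?K. Z p x)" for x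
    unfolding centred_square_sum_def Z_def sum.cartesian_product by (rule sum.cong) auto
  have Z_square: "Z p x ^ 2 = X p x ^ 4 - 2 * X p x ^ 2 + 1" for p x
    unfolding Z_def by (simp add: power2_diff flip: power_mult)
  have Z_square_integrable: "integrable M (\<lambda>x. Z p x ^ 2)" for p
    unfolding Z_square using \<eta>_fourth_integrable \<eta>_square_integrable by simp
  have Z_second_moment: "expectation (\<lambda>x. Z p x ^ 2) \<le> \<kappa>" for p
    unfolding Z_square using \<eta>_fourth_integrable \<eta>_square_integrable \<eta>_variance \<eta>_fourth_moment[of "fst p" "snd p"]
    by (simp add: prob_space)
  have Z_orthogonal: "expectation (\<lambda>x. Z p x * Z q x) = 0" if "p \<noteq> q" for p q
  proof -
    have "expectation (Z p) = 0" for p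
      unfolding Z_def using \<eta>_square_integrable \<eta>_variance by (simp add: prob_space)
    moreover have "expectation (\<lambda>x. Z p x * Z q x) = expectation (Z p) * expectation (Z q)"
      unfolding Z_def using \<eta>_square_integrable
      by (intro expectation_mult_indep[OF that, of "\<lambda>y. y ^ 2 - 1" "\<lambda>y. y ^ 2 - 1"]) simp_all
    ultimately show ?thesis by simp
  qed
  have "integrable M (\<lambda>x. (\<Sum>p\<in>?K. Z p x) ^ 2)"
    "expectation (\<lambda>x. (\<Sum>p\<in>?K. Z p x) ^ 2) = (\<Sum>p\<in>?K. expectation (\<lambda>x. Z p x ^ 2))"
    by (intro integral_square_sum_orthogonal Z_square_integrable Z_orthogonal; simp add: Z_def)+
  moreover have "(\<Sum>p\<in>?K. expectation (\<lambda>x. Z p x ^ 2)) \<le> real N * real T * \<kappa>"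
    using sum_mono[of ?K "\<lambda>p. expectation (\<lambda>x. Z p x ^ 2)" "\<lambda>_. \<kappa>"] Z_second_moment by simp
  ultimately show "integrable M (\<lambda>x. centred_square_sum (\<lambda>i t. \<eta> i t x) N T ^ 2)"
    "expectation (\<lambda>x. centred_square_sum (\<lambda>i t. \<eta> i t x) N T ^ 2) \<le> real N * real T * \<kappa>"
    unfolding sum_Z by simp_all
qed


lemma expectation_cross_product_square:
  assumes "j \<noteq> i"
  shows "expectation (\<lambda>x. (\<eta> i t x * \<eta> j t x) ^ 2) = 1"
proof -
  have "expectation (\<lambda>x. X (i, t) x ^ 2 * X (j, t) x ^ 2)
      = expectation (\<lambda>x. X (i, t) x ^ 2) * expectation (\<lambda>x. X (j, t) x ^ 2)"
    using assms \<eta>_square_integrable by (intro expectation_mult_indep) simp_all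
  then show ?thesis by (simp add: power_mult_distrib \<eta>_variance)
qed

lemma expectation_cross_products_orthogonal:
  assumes "j < i" "j' < i'" "(t, i, j) \<noteq> (s, i', j')"
  shows "expectation (\<lambda>x. (\<eta> i t x * \<eta> j t x) * (\<eta> i' s x * \<eta> j' s x)) = 0"
proof -
  have "(i, t) \<notin> {(j, t), (i', s), (j', s)} \<or> (j, t) \<notin> {(i, t), (i', s), (j', s)}"
    using assms by auto
  then show ?thesis
  proof
    assume "(i, t) \<notin> {(j, t), (i', s), (j', s)}"
    from expectation_mult_vanish_if_unique[OF this] show ?thesis by (simp add: ac_simps)
  next
    assume "(j, t) \<notin> {(i, t), (i', s), (j', s)}"
    from expectation_mult_vanish_if_unique[OF this] show ?thesis by (simp add: ac_simps)
  qed
qed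

lemma cross_product_sum_second_moment:
  shows "integrable M (\<lambda>x. cross_product_sum (\<lambda>i t. \<eta> i t x) N T ^ 2)"
    and "expectation (\<lambda>x. cross_product_sum (\<lambda>i t. \<eta> i t x) N T ^ 2) \<le> real T * real N ^ 2"
proof -
  let ?K = "Sigma {1..T} (\<lambda>t. Sigma {2..N} (\<lambda>i. {1..i-1}))"
  define Z where "Z k x = X (fst (snd k), fst k) x * X (snd (snd k), fst k) x" for k x
  have sum_Z: "cross_product_sum (\<lambda>i t. \<eta> i t x) N T = (\<Sum>k\<in>?K. Z k x)" for x
    unfolding cross_product_sum_def Z_def by (simp add: sum.Sigma split_def)
  have Z_square_integrable: "integrable M (\<lambda>x. Z k x ^ 2)" for k
    unfolding Z_def power_mult_distrib using \<eta>_fourth_integrable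
    by (intro integrable_mult_if_square_integrable) (simp_all flip: power_mult)
  have Z_orthogonal: "expectation (\<lambda>x. Z k x * Z l x) = 0" if "k \<in> ?K" "l \<in> ?K" "k \<noteq> l" for k l
  proof -
    obtain t i j s i' j' where "k = (t, i, j)" "l = (s, i', j')" "j < i" "j' < i'"
      using \<open>k \<in> ?K\<close> \<open>l \<in> ?K\<close> by auto
    with \<open>k \<noteq> l\<close> show ?thesis
      using expectation_cross_products_orthogonal[of j i j' i' t s] unfolding Z_def by simp
  qed
  have "integrable M (\<lambda>x. (\<Sum>k\<in>?K. Z k x) ^ 2)"
    "expectation (\<lambda>x. (\<Sum>k\<in>?K. Z k x) ^ 2) = (\<Sum>k\<in>?K. expectation (\<lambda>x. Z k x ^ 2))"
    by (intro integral_square_sum_orthogonal Z_square_integrable Z_orthogonal; simp add: Z_def)+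
  moreover have "(\<Sum>k\<in>?K. expectation (\<lambda>x. Z k x ^ 2)) = real (card ?K)"
    unfolding real_of_card by (intro sum.cong refl) (auto simp: Z_def expectation_cross_product_square)
  moreover have "card ?K \<le> card ({1..T} \<times> {1..N} \<times> {1..N})"
    by (intro card_mono) auto
  then have "real (card ?K) \<le> real T * real N ^ 2"
    by (simp add: card_cartesian_product power2_eq_square flip: of_nat_mult)
  ultimately show "integrable M (\<lambda>x. cross_product_sum (\<lambda>i t. \<eta> i t x) N T ^ 2)"
    "expectation (\<lambda>x. cross_product_sum (\<lambda>i t. \<eta> i t x) N T ^ 2) \<le> real T * real N ^ 2"
    unfolding sum_Z by simp_all
qed

lemma CD_remainder_tail_bound:
  assumes "2 \<le> N" "1 \<le> T" "0 < e"
  shows "measure M {x \<in> space M. e < sqrt (real N) *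
      \<bar>(1 - sqrt (1 - 1 / real N)) / (real N * sqrt (2 * real T)) * centred_square_sum (\<lambda>i t. \<eta> i t x) N T
       + sqrt (2 / (real T * real N * (real N - 1))) / real N * cross_product_sum (\<lambda>i t. \<eta> i t x) N T\<bar>}
    \<le> (\<kappa> + 4) / e^2 / (real N - 1)"
  (is "measure M {x \<in> space M. e < sqrt (real N) * \<bar>?a * ?S x + ?b * ?Q x\<bar>} \<le> _")
proof -
  have "measure M {x \<in> space M. e < sqrt (real N) * \<bar>?a * ?S x + ?b * ?Q x\<bar>}
      \<le> 2 * real N * (?a^2 * expectation (\<lambda>x. ?S x ^ 2) + ?b^2 * expectation (\<lambda>x. ?Q x ^ 2)) / e^2"
    using \<open>0 < e\<close> centred_square_sum_second_moment(1) cross_product_sum_second_moment(1)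
    by (intro measure_tail_linear_combination_le) simp_all
  also have "\<dots> \<le> 2 * real N * (?a^2 * (real N * real T * \<kappa>) + ?b^2 * (real T * real N ^ 2)) / e^2"
    by (intro divide_right_mono mult_left_mono add_mono
        centred_square_sum_second_moment(2) cross_product_sum_second_moment(2)) simp_all
  also have "\<dots> \<le> (\<kappa> + 4) / (real N - 1) / e^2"
    using CD_remainder_coefficients_le[OF assms(1,2) \<kappa>_nonneg] by (intro divide_right_mono) simp_all
  finally show ?thesis
    by (simp add: divide_divide_eq_left mult.commute)
qed

theorem CD_stat_expansion:
  fixes s :: "nat \<Rightarrow> 'a \<Rightarrow> real" and \<tau> :: "nat \<Rightarrow> real"
  assumes "\<sigma> \<noteq> 0" and common_scale: "AE x in M. \<forall>i. s i x = \<sigma>" and "0 < e"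
  shows "((\<lambda>(N, T). measure M {x \<in> space M.
             sqrt (real N) *
             \<bar>CD_stat (\<lambda>i t. \<tau> t + s i x * \<eta> i t x) (\<lambda>i. s i x) N T
              - ( - sqrt ((real T - real T / real N) / 2)
                  - 1 / sqrt (2 * real N) *
                    (1 / sqrt (real N * real T) *
                     (\<Sum>i=1..N. \<Sum>t=1..T. (s i x * \<eta> i t x)^2 / \<sigma>^2 - 1)))\<bar> > e})
           \<longlongrightarrow> 0) (sequentially \<times>\<^sub>F sequentially)"
proof (rule tendsto_zero_prod_sequentially_if_le_inverse[where C = "(\<kappa> + 4) / e^2"], goal_cases)
  case (2 N T)
  show ?case
  proof (rule order_trans[OF finite_measure_mono_AE CD_remainder_tail_bound[of N T e]], goal_cases)
    case 1
    show ?case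
      using common_scale
      by eventually_elim
        (use CD_stat_common_scale_remainder[of N \<sigma>] 2 \<open>\<sigma> \<noteq> 0\<close> in auto)
  qed (use 2 \<open>0 < e\<close> in measurable)
qed simp

end

theorem corollary1:
  fixes M :: "'a measure"
    and \<eta> :: "nat \<Rightarrow> nat \<Rightarrow> 'a \<Rightarrow> real"
    and sig :: "nat \<Rightarrow> 'a \<Rightarrow> real"
    and \<tau> :: "nat \<Rightarrow> real"
    and \<sigma> \<delta> B :: real
  assumes prob: "prob_space M"
    and meas_eta: "\<And>i t. \<eta> i t \<in> borel_measurable M"
    and indep: "prob_space.indep_vars M (\<lambda>_. borel) (\<lambda>p. \<eta> (fst p) (snd p)) UNIV"
    and ident: "\<And>i t. distr M borel (\<eta> i t) = distr M borel (\<eta> 0 0)"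
    and int1: "integrable M (\<eta> 0 0)"
    and mean0: "integral\<^sup>L M (\<eta> 0 0) = 0"
    and var1: "integral\<^sup>L M (\<lambda>x. (\<eta> 0 0 x)^2) = 1"
    and int8: "integrable M (\<lambda>x. (\<eta> 0 0 x)^8)"
    and mom8: "integral\<^sup>L M (\<lambda>x. (\<eta> 0 0 x)^8) < B"
    and delta_pos: "0 < \<delta>"
    and meas_sig: "\<And>i. sig i \<in> borel_measurable M"
    and sig_bounds: "\<And>i x. x \<in> space M \<Longrightarrow> \<delta> \<le> sig i x \<and> sig i x \<le> B"
    and joint_indep: "prob_space.indep_vars M (\<lambda>_. borel)
                      (\<lambda>k. case k of Inl i \<Rightarrow> sig i | Inr p \<Rightarrow> \<eta> (fst p) (snd p))
                      (UNIV :: (nat + nat \<times> nat) set)"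
    and sig_ident: "\<And>i. distr M borel (sig i) = distr M borel (sig 0)"
    and sig_const: "\<And>i. AE x in M. sig i x = \<sigma>"
  shows "\<forall>e>0. ((\<lambda>(N, T). measure M {x \<in> space M.
             sqrt (real N) *
             \<bar>CD_stat (\<lambda>i t. \<tau> t + sig i x * \<eta> i t x) (\<lambda>i. sig i x) N T
              - ( - sqrt ((real T - real T / real N) / 2)
                  - 1 / sqrt (2 * real N) *
                    (1 / sqrt (real N * real T) *
                     (\<Sum>i=1..N. \<Sum>t=1..T. (sig i x * \<eta> i t x)^2 / \<sigma>^2 - 1)))\<bar> > e})
           \<longlongrightarrow> 0) (sequentially \<times>\<^sub>F sequentially)"
proof -
  (* Only four moments of eta are needed, and of the scales only sig_i = sigma a.s. with
     sigma >= delta > 0. *)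
  interpret prob_space M by (rule prob)
  have "integrable M (\<lambda>x. \<eta> 0 0 x ^ 4)"
    using square_integrable_imp_integrable[of "\<lambda>x. \<eta> 0 0 x ^ 4"] int8 meas_eta[of 0 0]
    by (simp flip: power_mult)
  then interpret standardized_panel M \<eta> "expectation (\<lambda>x. \<eta> 0 0 x ^ 4)"
    by (rule standardized_panel_if_iid[OF prob meas_eta indep ident _ mean0 var1])
  have "AE x in M. \<delta> \<le> \<sigma>"
    using sig_const[of 0] AE_space by eventually_elim (use sig_bounds in force)
  then have "\<sigma> \<noteq> 0"
    using delta_pos by simp
  moreover have "AE x in M. \<forall>i. sig i x = \<sigma>"
    using sig_const by (simp add: AE_all_countable)
  ultimately show ?thesis
    by (blast intro: CD_stat_expansion)
qed

end
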